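(* Let $m\ge6$ be even, $t=m/2$, and $s$ an integer with $2\le s\le 2^{t-1}$. Let $E_1,\dots,E_\alpha$ be a partial spread in $\mathbb{F}_2^m$ and $A,B\subseteq\{1,\dots,\alpha\}$ with $|A|=|B|=s$ and $|A\cap B|=1$. Let $f=\sum_{i\in A}f_i$, $g=\sum_{i\in B}f_i$, and $F=\{f,g,f+g\}$. Then for every nonzero $\mathbf{h}\in\mathbb{F}_2^m$ and all $f_1,f_2\in F$ with $f_1\neq f_2$, \[\widehat{f_1}(\mathbf{h})+\widehat{f_2}(\mathbf{h})-\widehat{f_1+f_2}(\mathbf{0})\neq 2^m\quad\text{and}\quad \widehat{f_1}(\mathbf{h})+\widehat{f_2}(\mathbf{0})-\widehat{f_1+f_2}(\mathbf{h})\neq 2^m.\]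
   Context: A partial spread in $\mathbb{F}_2^m$ ($m=2t$) is a set of subspaces $E_1,\dots,E_\alpha$ of $\mathbb{F}_2^m$, each of dimension $t$, with $E_i\cap E_j=\{\mathbf{0}\}$ for $i\ne j$. $f_i:\mathbb{F}_2^m\to\mathbb{F}_2$ is the indicator function of $E_i\setminus\{\mathbf{0}\}$; sums of Boolean functions are mod 2. For a Boolean function $h$, $\widehat{h}(\mathbf{w})=\sum_{\mathbf{x}\in\mathbb{F}_2^m}(-1)^{h(\mathbf{x})+\mathbf{w}\cdot\mathbf{x}}$ with the standard inner product. *)

theory Defs
  imports "HOL-Analysis.Analysis" "HOL-Library.Z2"
begin

text \<open>Vectors of F_2^m are modelled as bit ^ 'n with CARD('n) = m; Boolean functions
  are maps bit ^ 'n \<Rightarrow> bit (so their sum is addition mod 2).\<close>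

definition dotF2 :: "bit ^ 'n \<Rightarrow> bit ^ 'n \<Rightarrow> bit" where
  "dotF2 w x = (\<Sum>i\<in>UNIV. w $ i * x $ i)"

definition walsh :: "(bit ^ 'n \<Rightarrow> bit) \<Rightarrow> bit ^ 'n \<Rightarrow> int" where
  "walsh h w = (\<Sum>x\<in>UNIV. (-1::int) ^ (if h x + dotF2 w x = 0 then 0 else 1))"

definition partial_spread :: "nat \<Rightarrow> nat \<Rightarrow> (nat \<Rightarrow> (bit ^ 'n) set) \<Rightarrow> bool" where
  "partial_spread t \<alpha> E \<longleftrightarrow>
     (\<forall>i\<in>{1..\<alpha>}. vec.subspace (E i) \<and> vec.dim (E i) = t) \<and>
     (\<forall>i\<in>{1..\<alpha>}. \<forall>j\<in>{1..\<alpha>}. i \<noteq> j \<longrightarrow> E i \<inter> E j = {0})"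

definition spread_ind :: "(bit ^ 'n) set \<Rightarrow> bit ^ 'n \<Rightarrow> bit" where
  "spread_ind S x = (if x \<in> S \<and> x \<noteq> 0 then 1 else 0)"

end

theory Submission
  imports Defs
begin

text \<open>For S a set of spread indices let f_S be the sum of the f_i over S. Because distinct
  spread elements meet only in 0, the Walsh transform of f_S at w is the full character sum
  minus twice the sum over i in S of the character sums over E_i, each corrected by 1.
  Character sums over a subspace are 0 or its cardinality, so the transform is congruent to
  2|S| modulo 2^(t+1). Since f_S + f_T = f_(S \<Delta> T), every combination in question is
  congruent to 4|S \<inter> T| modulo 2^(t+1), and 2^m is congruent to 0; for the three sets
  A, B, A \<Delta> B the overlaps are 1 or s - 1, and 0 < 4(s - 1) < 2^(t+1).\<close>

lemma UNIV_bit: "(UNIV :: bit set) = {0, 1}"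
  by (auto intro: bit.exhaust)

instance bit :: finite
  by standard (simp add: UNIV_bit)

lemma card_UNIV_bit [simp]: "CARD(bit) = 2"
  by (simp add: UNIV_bit)

lemma bit_vec_add_cancel_left [simp]: "(x :: bit ^ 'n) + (x + y) = y"
  by (simp add: vec_eq_iff add.assoc[symmetric])

lemma card_span_finite_field:
  fixes B :: "('a::{field,finite} ^ 'n) set"
  assumes "vec.independent B"
  shows "card (vec.span B) = CARD('a) ^ card B"
proof -
  have "finite B" by simp
  then show ?thesis using assms
  proof (induction B rule: finite_induct)
    case empty
    then show ?case by simp
  next
    case (insert b B)
    then have b: "b \<notin> vec.span B" and IH: "card (vec.span B) = CARD('a) ^ card B"
      by (auto simp: vec.independent_insert)
    define comb where "comb = (\<lambda>(k::'a, y). k *s b + y)"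
    have span_eq: "vec.span (insert b B) = comb ` (UNIV \<times> vec.span B)"
    proof (intro equalityI subsetI)
      fix x assume "x \<in> vec.span (insert b B)"
      then obtain k where "x - k *s b \<in> vec.span B" by (auto simp: vec.span_insert)
      moreover have "x = comb (k, x - k *s b)" by (simp add: comb_def)
      ultimately show "x \<in> comb ` (UNIV \<times> vec.span B)" by blast
    next
      fix x assume "x \<in> comb ` (UNIV \<times> vec.span B)"
      then obtain k y where "y \<in> vec.span B" "x = k *s b + y" by (auto simp: comb_def)
      then show "x \<in> vec.span (insert b B)" by (auto simp: vec.span_insert intro!: exI[of _ k])
    qed
    have "inj_on comb (UNIV \<times> vec.span B)"
    proof (rule inj_onI, clarify)
      fix k1 k2 :: 'a and y1 y2
      assume y: "y1 \<in> vec.span B" "y2 \<in> vec.span B" and eq: "comb (k1, y1) = comb (k2, y2)"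
      then have diff: "(k1 - k2) *s b = y2 - y1" by (simp add: comb_def algebra_simps)
      show "k1 = k2 \<and> y1 = y2"
      proof (cases "k1 = k2")
        case True then show ?thesis using diff by simp
      next
        case False
        then have "b = inverse (k1 - k2) *s ((k1 - k2) *s b)"
          by (metis vector_smult_assoc left_inverse right_minus_eq vector_smult_lid)
        also have "\<dots> = inverse (k1 - k2) *s (y2 - y1)" by (simp only: diff)
        also have "\<dots> \<in> vec.span B" using y by (intro vec.span_scale vec.span_diff)
        finally show ?thesis using b by simp
      qed
    qed
    then have "card (vec.span (insert b B)) = CARD('a) * card (vec.span B)"
      by (simp add: span_eq card_image card_cartesian_product)
    then show ?case using IH insert.hyps by simp
  qed
qed

lemma card_subspace_finite_field:
  fixes V :: "('a::{field,finite} ^ 'n) set"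
  assumes "vec.subspace V"
  shows "card V = CARD('a) ^ vec.dim V"
proof -
  obtain B where "B \<subseteq> V" "vec.independent B" "V \<subseteq> vec.span B" "card B = vec.dim V"
    by (rule vec.basis_exists)
  moreover have "vec.span B = V" using calculation assms by (intro vec.span_subspace) auto
  ultimately show ?thesis using card_span_finite_field by metis
qed

definition bit_sign :: "bit \<Rightarrow> int" where
  "bit_sign b = (if b = 0 then 1 else -1)"

lemma bit_sign_add: "bit_sign (a + b) = bit_sign a * bit_sign b"
  by (cases a; cases b) (simp_all add: bit_sign_def)

lemma bit_sign_of_nat: "n \<le> 1 \<Longrightarrow> bit_sign (of_nat n) = 1 - 2 * int n"
  by (cases n) (simp_all add: bit_sign_def)

lemma dotF2_add_right: "dotF2 w (x + y) = dotF2 w x + dotF2 w y"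
proof -
  have "dotF2 w (x + y) = (\<Sum>i\<in>UNIV. w $ i * x $ i + w $ i * y $ i)"
    unfolding dotF2_def by (rule sum.cong) (simp_all only: vector_add_component distrib_left)
  then show ?thesis
    by (simp only: dotF2_def sum.distrib)
qed

lemma dotF2_zero_right [simp]: "dotF2 w 0 = 0"
  by (simp add: dotF2_def)

definition character :: "bit ^ 'n \<Rightarrow> bit ^ 'n \<Rightarrow> int" where
  "character w x = bit_sign (dotF2 w x)"

lemma character_add: "character w (x + y) = character w x * character w y"
  unfolding character_def dotF2_add_right by (rule bit_sign_add)

lemma walsh_eq_sum_character: "walsh h w = (\<Sum>x\<in>UNIV. character w x * bit_sign (h x))"
  unfolding walsh_def character_def
  by (rule sum.cong) (simp_all add: bit_sign_add[symmetric] add.commute, simp add: bit_sign_def)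

lemma sum_character_additive_subgroup:
  fixes V :: "(bit ^ 'n) set"
  assumes "0 \<in> V" and add_closed: "\<And>x y. x \<in> V \<Longrightarrow> y \<in> V \<Longrightarrow> x + y \<in> V"
  shows "(\<Sum>x\<in>V. character w x) = (if \<forall>x\<in>V. dotF2 w x = 0 then int (card V) else 0)"
proof (cases "\<forall>x\<in>V. dotF2 w x = 0")
  case True
  then show ?thesis by (simp add: character_def bit_sign_def)
next
  case False
  then obtain x0 where x0: "x0 \<in> V" "dotF2 w x0 \<noteq> 0" by auto
  have "bij_betw ((+) x0) V V"
    by (rule bij_betwI[where g = "(+) x0"]) (auto simp: x0(1) add_closed)
  then have "(\<Sum>x\<in>V. character w x) = (\<Sum>x\<in>V. character w (x0 + x))"
    by (rule sum.reindex_bij_betw[symmetric])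
  also have "\<dots> = - (\<Sum>x\<in>V. character w x)"
    using x0(2) by (simp add: character_add sum_negf character_def[of w x0] bit_sign_def)
  finally have "(\<Sum>x\<in>V. character w x) = 0" by simp
  with False show ?thesis by (simp only: if_False)
qed

lemma card_dvd_sum_character:
  fixes V :: "(bit ^ 'n) set"
  assumes "vec.subspace V"
  shows "int (card V) dvd (\<Sum>x\<in>V. character w x)"
  using assms by (simp add: sum_character_additive_subgroup vec.subspace_0 vec.subspace_add)

lemma sum_bit_sym_diff:
  fixes g :: "'a \<Rightarrow> bit"
  assumes "finite S1" "finite S2"
  shows "sum g S1 + sum g S2 = sum g (sym_diff S1 S2)"
proof -
  have "sum g S1 = sum g (S1 \<inter> S2) + sum g (S1 - S2)"
    using assms(1) by (rule sum.Int_Diff)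
  moreover have "sum g S2 = sum g (S1 \<inter> S2) + sum g (S2 - S1)"
    using sum.Int_Diff[OF assms(2), of g S1] by (simp only: Int_commute)
  moreover have "sum g (sym_diff S1 S2) = sum g (S1 - S2) + sum g (S2 - S1)"
    using assms by (intro sum.union_disjoint) auto
  moreover have "a + b + (a + c) = b + c" for a b c :: bit
    by (cases a; cases b; cases c) simp_all
  ultimately show ?thesis by simp
qed

definition spread_sum :: "(nat \<Rightarrow> (bit ^ 'n) set) \<Rightarrow> nat set \<Rightarrow> bit ^ 'n \<Rightarrow> bit" where
  "spread_sum E S x = (\<Sum>i\<in>S. spread_ind (E i) x)"

lemma spread_sum_sym_diff:
  "finite S1 \<Longrightarrow> finite S2 \<Longrightarrow>
    (\<lambda>x. spread_sum E S1 x + spread_sum E S2 x) = spread_sum E (sym_diff S1 S2)"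
  by (rule ext) (unfold spread_sum_def, rule sum_bit_sym_diff)

lemma spread_sum_eq_card:
  "finite S \<Longrightarrow> spread_sum E S x = of_nat (card {i \<in> S. x \<in> E i \<and> x \<noteq> 0})"
  by (simp add: spread_sum_def spread_ind_def of_bool_def[symmetric] Collect_conj_eq Int_assoc)

lemma card_spread_members_le_1:
  assumes "finite S" and "\<forall>i\<in>S. \<forall>j\<in>S. i \<noteq> j \<longrightarrow> E i \<inter> E j = {0}"
  shows "card {i \<in> S. x \<in> E i \<and> x \<noteq> 0} \<le> 1"
  using assms by (auto simp: card_le_Suc0_iff_eq)

lemma walsh_spread_sum:
  assumes fin: "finite S" and disjoint: "\<forall>i\<in>S. \<forall>j\<in>S. i \<noteq> j \<longrightarrow> E i \<inter> E j = {0}"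
    and zero: "\<forall>i\<in>S. 0 \<in> E i"
  shows "walsh (spread_sum E S) w
    = (\<Sum>x\<in>UNIV. character w x) - 2 * (\<Sum>i\<in>S. (\<Sum>x\<in>E i. character w x) - 1)"
proof -
  let ?P = "\<lambda>x i. x \<in> E i \<and> x \<noteq> 0"
  \<comment> \<open>a nonzero point lies in at most one E i, so the parity f_S x is the integer count\<close>
  have sign: "bit_sign (spread_sum E S x) = 1 - 2 * (\<Sum>i\<in>S. of_bool (?P x i))" for x
    using fin card_spread_members_le_1[OF fin disjoint, of x]
    by (simp add: spread_sum_eq_card bit_sign_of_nat Collect_conj_eq Int_commute)
  have subspace_term: "(\<Sum>x\<in>UNIV. character w x * of_bool (?P x i)) = (\<Sum>x\<in>E i. character w x) - 1"
    if "i \<in> S" for i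
  proof -
    have "(\<Sum>x\<in>UNIV. character w x * of_bool (?P x i)) = (\<Sum>x\<in>E i - {0}. character w x)"
      by (simp add: Collect_conj_eq set_diff_eq)
    also have "\<dots> = (\<Sum>x\<in>E i. character w x) - 1"
      using zero that by (simp add: sum_diff1 character_def bit_sign_def)
    finally show ?thesis .
  qed
  have "walsh (spread_sum E S) w = (\<Sum>x\<in>UNIV. character w x * (1 - 2 * (\<Sum>i\<in>S. of_bool (?P x i))))"
    by (simp only: walsh_eq_sum_character sign)
  also have "\<dots> = (\<Sum>x\<in>UNIV. character w x)
      - 2 * (\<Sum>i\<in>S. \<Sum>x\<in>UNIV. character w x * of_bool (?P x i))"
    by (simp add: algebra_simps sum_subtractf sum_distrib_left sum.swap[of _ S]
        del: sum_of_bool_eq sum_mult_of_bool_eq)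
  also have "\<dots> = (\<Sum>x\<in>UNIV. character w x) - 2 * (\<Sum>i\<in>S. (\<Sum>x\<in>E i. character w x) - 1)"
    by (simp only: subspace_term cong: sum.cong)
  finally show ?thesis .
qed

lemma walsh_spread_sum_dvd:
  fixes E :: "nat \<Rightarrow> (bit ^ 'n) set"
  assumes spread: "partial_spread t \<alpha> E" and S: "S \<subseteq> {1..\<alpha>}" and dim: "t < CARD('n)"
  shows "(2::int) ^ (t + 1) dvd walsh (spread_sum E S) w - 2 * int (card S)"
proof -
  have subspace: "vec.subspace (E i)" and card_E: "card (E i) = 2 ^ t" if "i \<in> S" for i
    using spread S that card_subspace_finite_field[of "E i"] by (auto simp: partial_spread_def)
  have fin: "finite S" using S finite_subset by blast
  have disjoint: "\<forall>i\<in>S. \<forall>j\<in>S. i \<noteq> j \<longrightarrow> E i \<inter> E j = {0}"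
    using spread S unfolding partial_spread_def by blast
  have zero: "\<forall>i\<in>S. 0 \<in> E i" using subspace vec.subspace_0 by blast
  have "walsh (spread_sum E S) w - 2 * int (card S)
      = (\<Sum>x\<in>UNIV. character w x) - (\<Sum>i\<in>S. 2 * (\<Sum>x\<in>E i. character w x))"
    by (simp add: walsh_spread_sum[OF fin disjoint zero] sum_subtractf sum_distrib_left)
  also have "(2::int) ^ (t + 1) dvd \<dots>"
  proof (rule dvd_diff[OF _ dvd_sum])
    have "(2::int) ^ (t + 1) dvd 2 ^ CARD('n)"
      using dim by (intro le_imp_power_dvd) simp
    also have "\<dots> dvd (\<Sum>x\<in>UNIV. character w x)"
      using card_dvd_sum_character[OF vec.subspace_UNIV, of w] by simp
    finally show "(2::int) ^ (t + 1) dvd (\<Sum>x\<in>UNIV. character w x)" .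
    show "(2::int) ^ (t + 1) dvd 2 * (\<Sum>x\<in>E i. character w x)" if "i \<in> S" for i
      using card_dvd_sum_character[OF subspace[OF that], of w] card_E[OF that] by simp
  qed
  finally show ?thesis .
qed

lemma card_sym_diff:
  assumes "finite S1" "finite S2"
  shows "int (card (sym_diff S1 S2)) = int (card S1) + int (card S2) - 2 * int (card (S1 \<inter> S2))"
proof -
  have "card (sym_diff S1 S2) = card (S1 - S2) + card (S2 - S1)"
    using assms by (intro card_Un_disjoint) auto
  moreover have "card S1 = card (S1 \<inter> S2) + card (S1 - S2)"
    using assms(1) by (rule card_Int_Diff)
  moreover have "card S2 = card (S1 \<inter> S2) + card (S2 - S1)"
    using card_Int_Diff[OF assms(2), of S1] by (simp add: Int_commute)
  ultimately show ?thesis by simp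
qed

lemma walsh_spread_sum_combination_ne:
  fixes E :: "nat \<Rightarrow> (bit ^ 'n) set"
  assumes spread: "partial_spread t \<alpha> E" and S1: "S1 \<subseteq> {1..\<alpha>}" and S2: "S2 \<subseteq> {1..\<alpha>}"
    and dim: "t < CARD('n)"
    and overlap: "0 < card (S1 \<inter> S2)" "4 * card (S1 \<inter> S2) < 2 ^ (t + 1)"
  shows "walsh (spread_sum E S1) w1 + walsh (spread_sum E S2) w2
    - walsh (spread_sum E (sym_diff S1 S2)) w3 \<noteq> 2 ^ CARD('n)"
proof
  let ?M = "(2::int) ^ (t + 1)" and ?c = "int (card (S1 \<inter> S2))"
  assume sum_eq: "walsh (spread_sum E S1) w1 + walsh (spread_sum E S2) w2
    - walsh (spread_sum E (sym_diff S1 S2)) w3 = 2 ^ CARD('n)"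
  have S3: "sym_diff S1 S2 \<subseteq> {1..\<alpha>}" using S1 S2 by blast
  have fin: "finite S1" "finite S2" using S1 S2 finite_subset by blast+
  have "?M dvd (walsh (spread_sum E S1) w1 - 2 * int (card S1))
      + (walsh (spread_sum E S2) w2 - 2 * int (card S2))
      - (walsh (spread_sum E (sym_diff S1 S2)) w3 - 2 * int (card (sym_diff S1 S2)))"
    by (rule dvd_diff[OF dvd_add walsh_spread_sum_dvd[OF spread S3 dim]],
        rule walsh_spread_sum_dvd[OF spread S1 dim], rule walsh_spread_sum_dvd[OF spread S2 dim])
  also have "\<dots> = 2 ^ CARD('n) - 4 * ?c"
    using sum_eq card_sym_diff[OF fin] by simp
  finally have "?M dvd 2 ^ CARD('n) - 4 * ?c" .
  moreover have "?M dvd 2 ^ CARD('n)"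
    using dim by (intro le_imp_power_dvd) simp
  ultimately have "?M dvd 2 ^ CARD('n) - (2 ^ CARD('n) - 4 * ?c)"
    by (rule dvd_diff[rotated])
  then have "?M dvd 4 * ?c" by simp
  then have "?M \<le> 4 * ?c"
    using overlap(1) by (intro zdvd_imp_le) auto
  moreover have "int (4 * card (S1 \<inter> S2)) < int (2 ^ (t + 1))"
    using overlap(2) by (simp only: of_nat_less_iff)
  ultimately show False by simp
qed

lemma card_Int_sym_diff_family:
  assumes "finite A" "finite B" "card A = s" "card B = s" "card (A \<inter> B) = 1"
    and "S1 \<in> {A, B, sym_diff A B}" "S2 \<in> {A, B, sym_diff A B}" "S1 \<noteq> S2"
  shows "card (S1 \<inter> S2) = 1 \<or> card (S1 \<inter> S2) = s - 1"
proof -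
  define D where "D = sym_diff A B"
  have "A \<inter> D = A - B" "B \<inter> D = B - A" by (auto simp: D_def)
  moreover have "card (A - B) = s - 1" "card (B - A) = s - 1"
    using assms(1-5) by (simp_all add: card_Diff_subset_Int Int_commute)
  ultimately have "card (A \<inter> B) = 1" "card (B \<inter> A) = 1" "card (A \<inter> D) = s - 1"
    "card (D \<inter> A) = s - 1" "card (B \<inter> D) = s - 1" "card (D \<inter> B) = s - 1"
    using assms(5) by (simp_all add: Int_commute)
  moreover have "S1 = A \<or> S1 = B \<or> S1 = D" "S2 = A \<or> S2 = B \<or> S2 = D"
    using assms(6,7) by (simp_all add: D_def)
  ultimately show ?thesis using assms(8) by fastforce
qed

theorem lemma6:
  fixes m t s \<alpha> :: nat and E :: "nat \<Rightarrow> (bit ^ 'n) set" and A B :: "nat set"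
    and f g :: "bit ^ 'n \<Rightarrow> bit" and F :: "(bit ^ 'n \<Rightarrow> bit) set"
  assumes "CARD('n) = m" and "even m" and "m \<ge> 6" and "t = m div 2"
    and "2 \<le> s" and "s \<le> 2 ^ (t - 1)"
    and "partial_spread t \<alpha> E"
    and "A \<subseteq> {1..\<alpha>}" and "B \<subseteq> {1..\<alpha>}"
    and "card A = s" and "card B = s" and "card (A \<inter> B) = 1"
    and "f = (\<lambda>x. \<Sum>i\<in>A. spread_ind (E i) x)"
    and "g = (\<lambda>x. \<Sum>i\<in>B. spread_ind (E i) x)"
    and "F = {f, g, (\<lambda>x. f x + g x)}"
  shows "\<forall>h. h \<noteq> 0 \<longrightarrow> (\<forall>f1\<in>F. \<forall>f2\<in>F. f1 \<noteq> f2 \<longrightarrow>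
           walsh f1 h + walsh f2 h - walsh (\<lambda>x. f1 x + f2 x) 0 \<noteq> 2 ^ m \<and>
           walsh f1 h + walsh f2 0 - walsh (\<lambda>x. f1 x + f2 x) h \<noteq> 2 ^ m)"
proof (intro allI impI ballI)
  fix h :: "bit ^ 'n" and f1 f2 assume "f1 \<in> F" "f2 \<in> F" "f1 \<noteq> f2"
  let ?family = "{A, B, sym_diff A B}"
  have fin: "finite S" if "S \<subseteq> {1..\<alpha>}" for S using that finite_subset by blast
  have family: "S \<subseteq> {1..\<alpha>}" if "S \<in> ?family" for S using that assms(8,9) by blast
  have fg: "f = spread_sum E A" "g = spread_sum E B"
    using assms(13,14) by (simp_all add: spread_sum_def fun_eq_iff)
  have "(\<lambda>x. f x + g x) = spread_sum E (sym_diff A B)"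
    using spread_sum_sym_diff[OF fin fin, OF assms(8,9)] by (simp only: fg)
  then have F: "F = spread_sum E ` ?family"
    by (simp only: assms(15) fg image_insert image_empty)
  obtain S1 S2 where S12: "S1 \<in> ?family" "S2 \<in> ?family"
    and f12: "f1 = spread_sum E S1" "f2 = spread_sum E S2"
    using \<open>f1 \<in> F\<close> \<open>f2 \<in> F\<close> unfolding F by (elim imageE) simp
  have distinct: "S1 \<noteq> S2" using f12 \<open>f1 \<noteq> f2\<close> by auto
  have sum: "(\<lambda>x. spread_sum E S1 x + spread_sum E S2 x) = spread_sum E (sym_diff S1 S2)"
    using S12 by (intro spread_sum_sym_diff fin family)
  have "t \<noteq> 0" using assms(3,4) by simp
  then have "4 * (s - 1) < (2::nat) ^ (t + 1)" using assms(5,6) by (cases t) auto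
  then have "0 < card (S1 \<inter> S2)" "4 * card (S1 \<inter> S2) < 2 ^ (t + 1)"
    using card_Int_sym_diff_family[OF fin fin assms(10-12) S12 distinct, OF assms(8,9)] assms(5) by auto
  moreover have "t < CARD('n)" using assms(1,3,4) by simp
  ultimately show "walsh f1 h + walsh f2 h - walsh (\<lambda>x. f1 x + f2 x) 0 \<noteq> 2 ^ m \<and>
      walsh f1 h + walsh f2 0 - walsh (\<lambda>x. f1 x + f2 x) h \<noteq> 2 ^ m"
    unfolding f12 sum assms(1)[symmetric]
    using walsh_spread_sum_combination_ne[OF assms(7) family family, OF S12] by blast
qed

end
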